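(* Let $k\ge1$ and let $\alpha_1\ge\alpha_2\ge\dots\ge\alpha_k$ be real numbers in $[0,1]$ with $\alpha_1+\dots+\alpha_k=1$ (where $\alpha_2:=0$ if $k=1$). Let $0\le\delta\le\frac1{16}$. Then at least one of the following holds: (A) $\alpha_1\ge\frac13+\frac23\delta$; (B) $\alpha_1+\alpha_2\ge\frac12+\delta$; (C) there is a non-empty subset $I\subseteq\{1,\dots,k\}$ with $2\delta\le\sum_{i\in I}\alpha_i\le\frac13-\frac43\delta$. *)

theory Defs
  imports Main Complex_Main
begin

end

theory Submission
  imports Defs
begin

text \<open>Let \<open>m\<close> be the last index at which the tail sum \<open>\<alpha> m + \<dots> + \<alpha> k\<close> still reaches \<open>2\<delta>\<close>,
  so the tail after \<open>m\<close> is at most \<open>2\<delta>\<close>. If \<open>\<alpha> m \<le> 1/3 - 10/3 \<delta>\<close> the tail from \<open>m\<close> is a set as in (C);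
  if \<open>\<alpha> m\<close> lies between \<open>1/3 - 10/3 \<delta> \<ge> 2\<delta>\<close> and \<open>1/3 - 4/3 \<delta>\<close> the singleton \<open>{m}\<close> is. Otherwise
  \<open>\<alpha> 1, \<dots>, \<alpha> m\<close> all exceed \<open>1/4\<close>, so \<open>m \<le> 3\<close>, and these at most three largest weights carry
  mass at least \<open>1 - 2\<delta>\<close>, which yields (A) for \<open>m = 1\<close> and (B) for \<open>m \<in> {2, 3}\<close>.\<close>

lemma crossing_index:
  fixes f :: "nat \<Rightarrow> 'a::linorder"
  assumes "a \<le> b" and "c \<le> f a" and "f (Suc b) \<le> c"
  shows "\<exists>m\<in>{a..b}. c \<le> f m \<and> f (Suc m) \<le> c"
  using assms
proof (induction b rule: dec_induct)
  case base
  then show ?case by auto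
next
  case (step b)
  show ?case
  proof (cases "f (Suc b) \<le> c")
    case True
    then show ?thesis using step.IH step.prems by auto
  next
    case False
    then show ?thesis using step.hyps step.prems by (intro bexI[of _ "Suc b"]) auto
  qed
qed

lemma card_mult_less_sum:
  fixes a :: "'i \<Rightarrow> real"
  assumes "finite B" and "I \<subseteq> B" and "I \<noteq> {}"
    and "\<And>i. i \<in> B \<Longrightarrow> 0 \<le> a i" and "\<And>i. i \<in> I \<Longrightarrow> c < a i"
  shows "real (card I) * c < sum a B"
proof -
  have "finite I" using assms(2,1) by (rule finite_subset)
  then have "real (card I) * c = (\<Sum>i\<in>I. c)" by simp
  also have "\<dots> < sum a I"
    using \<open>finite I\<close> assms(3,5) by (intro sum_strict_mono) auto
  also have "\<dots> \<le> sum a B"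
    using assms(1,2,4) by (intro sum_mono2) auto
  finally show ?thesis .
qed

lemma heavy_prefix_bounds_top_two:
  fixes k m :: nat and \<alpha> :: "nat \<Rightarrow> real" and \<delta> :: real
  assumes nonneg: "\<And>i. i \<in> {1..k} \<Longrightarrow> 0 \<le> \<alpha> i"
    and mono: "\<And>i j. i \<in> {1..k} \<Longrightarrow> j \<in> {1..k} \<Longrightarrow> i \<le> j \<Longrightarrow> \<alpha> j \<le> \<alpha> i"
    and total: "(\<Sum>i=1..k. \<alpha> i) = 1"
    and m: "m \<in> {1..k}" and heavy: "1/4 < \<alpha> m"
    and light_tail: "(\<Sum>i=Suc m..k. \<alpha> i) \<le> 2 * \<delta>"
    and "\<delta> \<le> 1/16"
  shows "\<alpha> 1 \<ge> 1/3 + 2/3 * \<delta> \<or> \<alpha> 1 + (if k \<ge> 2 then \<alpha> 2 else 0) \<ge> 1/2 + \<delta>"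
proof -
  have prefix_heavy: "1/4 < \<alpha> i" if "i \<in> {1..m}" for i
    using heavy mono[of i m] that m by auto
  have "m \<le> 3"
  proof (rule ccontr)
    assume "\<not> m \<le> 3"
    then have "real (card {1..4::nat}) * (1/4) < (\<Sum>i=1..k. \<alpha> i)"
      using m nonneg prefix_heavy by (intro card_mult_less_sum) auto
    then show False using total by simp
  qed
  have "(\<Sum>i=1..k. \<alpha> i) = (\<Sum>i=1..m. \<alpha> i) + (\<Sum>i=Suc m..k. \<alpha> i)"
    using sum.ub_add_nat[of 1 m \<alpha> "k - m"] m by simp
  then have top: "1 - 2 * \<delta> \<le> (\<Sum>i=1..m. \<alpha> i)"
    using total light_tail by linarith
  have ordered: "\<alpha> 3 \<le> \<alpha> 2" "\<alpha> 2 \<le> \<alpha> 1" if "3 \<le> k"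
    using mono[of 2 3] mono[of 1 2] that by auto
  from \<open>m \<le> 3\<close> m consider "m = 1" | "m = 2" | "m = 3" by fastforce
  then show ?thesis
  proof cases
    case 1
    then show ?thesis using top \<open>\<delta> \<le> 1/16\<close> by simp
  next
    case 2
    then show ?thesis using top m \<open>\<delta> \<le> 1/16\<close> by (simp add: eval_nat_numeral)
  next
    case 3
    \<comment> \<open>\<open>\<alpha> 3\<close> is the smallest of three, so \<open>\<alpha> 1 + \<alpha> 2 \<ge> 2/3 * (1 - 2\<delta>) \<ge> 1/2 + \<delta>\<close>\<close>
    then show ?thesis using top m ordered \<open>\<delta> \<le> 1/16\<close> by (simp add: eval_nat_numeral)
  qed
qed

theorem lemma6p2:
  fixes k :: nat and \<alpha> :: "nat \<Rightarrow> real" and \<delta> :: real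
  assumes "k \<ge> 1"
    and "\<And>i. i \<in> {1..k} \<Longrightarrow> 0 \<le> \<alpha> i \<and> \<alpha> i \<le> 1"
    and "\<And>i j. i \<in> {1..k} \<Longrightarrow> j \<in> {1..k} \<Longrightarrow> i \<le> j \<Longrightarrow> \<alpha> j \<le> \<alpha> i"
    and "(\<Sum>i=1..k. \<alpha> i) = 1"
    and "0 \<le> \<delta>" and "\<delta> \<le> 1/16"
  shows "\<alpha> 1 \<ge> 1/3 + 2/3 * \<delta>
     \<or> \<alpha> 1 + (if k \<ge> 2 then \<alpha> 2 else 0) \<ge> 1/2 + \<delta>
     \<or> (\<exists>I. I \<noteq> {} \<and> I \<subseteq> {1..k} \<and> 2 * \<delta> \<le> (\<Sum>i\<in>I. \<alpha> i)
            \<and> (\<Sum>i\<in>I. \<alpha> i) \<le> 1/3 - 4/3 * \<delta>)"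
proof -
  let ?tail = "\<lambda>m. \<Sum>i=m..k. \<alpha> i"
  obtain m where m: "m \<in> {1..k}" and heavy_tail: "2 * \<delta> \<le> ?tail m"
    and light_tail: "?tail (Suc m) \<le> 2 * \<delta>"
    using crossing_index[of 1 k "2 * \<delta>" ?tail] assms(1,4,5,6) by auto
  have tail_split: "?tail m = \<alpha> m + ?tail (Suc m)"
    using m by (simp add: sum.atLeast_Suc_atMost)
  consider "\<alpha> m \<le> 1/3 - 10/3 * \<delta>" | "\<alpha> m \<in> {1/3 - 10/3 * \<delta>..1/3 - 4/3 * \<delta>}"
    | "1/3 - 4/3 * \<delta> < \<alpha> m"
    by fastforce
  then show ?thesis
  proof cases
    case 1
    with m heavy_tail light_tail tail_split show ?thesis
      by (intro disjI2 exI[of _ "{m..k}"]) auto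
  next
    case 2
    with m assms(6) show ?thesis by (intro disjI2 exI[of _ "{m}"]) auto
  next
    case 3
    then show ?thesis
      using heavy_prefix_bounds_top_two[OF _ assms(3,4) m _ light_tail assms(6)] assms(2,6) by auto
  qed
qed

end
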